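(* Let $M=(\mathcal{S},\mathcal{A},H,P,r,\mu)$ be a finite-horizon MDP with $\mathcal{S}\times\mathcal{A}$ compact, let $\boldsymbol\phi:\mathcal{S}\times\mathcal{A}\to\mathbb{R}^d$ be a feature map, and fix $h\in[H]$. The following two statements are equivalent. (1) There exist $d$ finite signed Borel measures $\boldsymbol\mu_h=(\mu_h^1,\dots,\mu_h^d)$ on $\mathcal{S}$ and a vector $\boldsymbol\theta_h\in\mathbb{R}^d$ such that for all $(s,a)\in\mathcal{S}\times\mathcal{A}$, $P(\cdot\mid h,s,a)=\boldsymbol\phi(s,a)^{\mathsf T}\boldsymbol\mu_h(\cdot)$ (equality of measures) and $r(h,s,a)=\boldsymbol\phi(s,a)^{\mathsf T}\boldsymbol\theta_h$. (2) There is a constant $C>0$ such that for every $f\in C(\mathcal{S})$ there exists $\boldsymbol\omega_{f,h}\in\mathbb{R}^d$ with $$(\mathcal{T}_hf)(s,a):=r(h,s,a)+\mathbb{E}_{s'\sim P(\cdot\mid h,s,a)}[f(s')]=\boldsymbol\phi(s,a)^{\mathsf T}\boldsymbol\omega_{f,h}\quad\text{for all }(s,a)\in\mathcal{S}\times\mathcal{A},$$ and $\|\boldsymbol\omega_{f,h}\|\le C(\|f\|_{C(\mathcal{S})}+1)$, where $\|\cdot\|$ is the Euclidean norm on $\mathbb{R}^d$.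
   Context: A finite-horizon MDP $M=(\mathcal{S},\mathcal{A},H,P,r,\mu)$ consists of a state space $\mathcal{S}$ and action space $\mathcal{A}$ (subsets of Euclidean spaces), a horizon $H$, Borel transition probabilities $P(\cdot\mid h,s,a)$ on $\mathcal{S}$ for $(h,s,a)\in[H]\times\mathcal{S}\times\mathcal{A}$, a deterministic continuous reward $r:[H]\times\mathcal{S}\times\mathcal{A}\to[0,1]$, and an initial distribution $\mu$. $C(\mathcal{S})$ denotes the bounded continuous real functions on $\mathcal{S}$ with the sup norm $\|\cdot\|_{C(\mathcal{S})}$. *)

theory Defs
  imports "HOL-Probability.Probability"
begin

text \<open>Each P h s a is a Borel probability measure on S (Borel sets of S = sets of
  restrict_space borel S); r is continuous on S x A with values in [0,1] for each h;
  mu is a Borel probability measure on S.\<close>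
definition finite_horizon_mdp ::
  "'a::euclidean_space set \<Rightarrow> 'b::euclidean_space set \<Rightarrow> nat \<Rightarrow>
   (nat \<Rightarrow> 'a \<Rightarrow> 'b \<Rightarrow> 'a measure) \<Rightarrow> (nat \<Rightarrow> 'a \<Rightarrow> 'b \<Rightarrow> real) \<Rightarrow> 'a measure \<Rightarrow> bool"
where
  "finite_horizon_mdp S A H P r mu \<longleftrightarrow>
     (\<forall>h\<in>{1..H}. \<forall>s\<in>S. \<forall>a\<in>A.
        prob_space (P h s a) \<and> sets (P h s a) = sets (restrict_space borel S)) \<and>
     (\<forall>h\<in>{1..H}. continuous_on (S \<times> A) (\<lambda>(s, a). r h s a) \<and>
        (\<forall>s\<in>S. \<forall>a\<in>A. 0 \<le> r h s a \<and> r h s a \<le> 1)) \<and>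
     prob_space mu \<and> sets mu = sets (restrict_space borel S)"

text \<open>A finite signed measure on the sigma-algebra of M: a real-valued, countably
  additive set function (values outside sets M are irrelevant).\<close>
definition finite_signed_measure :: "'a measure \<Rightarrow> ('a set \<Rightarrow> real) \<Rightarrow> bool" where
  "finite_signed_measure M \<nu> \<longleftrightarrow> \<nu> {} = 0 \<and>
     (\<forall>F::nat \<Rightarrow> 'a set. range F \<subseteq> sets M \<longrightarrow> disjoint_family F \<longrightarrow>
        (\<lambda>n. \<nu> (F n)) sums \<nu> (\<Union>n. F n))"

text \<open>C(S): bounded continuous real functions on S, with the sup norm.\<close>
definition bcontinuous :: "'a::topological_space set \<Rightarrow> ('a \<Rightarrow> real) \<Rightarrow> bool" where
  "bcontinuous S f \<longleftrightarrow> continuous_on S f \<and> bounded (f ` S)"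

definition sup_norm :: "'a set \<Rightarrow> ('a \<Rightarrow> real) \<Rightarrow> real" where
  "sup_norm S f = (SUP s\<in>S. \<bar>f s\<bar>)"

end

theory Submission
  imports Defs
begin

text \<open>Choose finitely many state-action pairs z whose features \<open>\<phi> z\<close> form a basis of the
  span of all features, with dual vectors \<open>b z\<close>, so that
  \<open>\<phi> x = (\<Sum>z. (\<phi> x \<bullet> b z) *\<^sub>R \<phi> z)\<close>. A real function g on \<open>S \<times> A\<close> is linear in the
  features exactly when \<open>g x = (\<Sum>z. (\<phi> x \<bullet> b z) * g z)\<close>, and then
  \<open>g x = \<phi> x \<bullet> (\<Sum>z. g z *\<^sub>R b z)\<close>. Both statements of the theorem are therefore equivalent to
  this identity for the reward and for the transition measures. From measures to Bellman
  backups, integrate the identity against f; the weight vector \<open>\<Sum>z. (T f) z *\<^sub>R b z\<close> has norm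
  at most \<open>(\<parallel>f\<parallel> + 1) \<Sum>z. \<parallel>b z\<parallel>\<close>. Conversely, bounded continuous functions determine finite
  Borel measures: continuous cutoffs converge to indicators of closed sets, and closed sets
  generate the Borel sets.\<close>

section \<open>Integrals against a linear combination of measures\<close>

lemma space_eq_if_sets_restrict_space:
  "sets M = sets (restrict_space borel S) \<Longrightarrow> space M = S"
  by (drule sets_eq_imp_space_eq) (simp add: space_restrict_space)

lemma integrable_bounded_measurable:
  fixes f :: "'a \<Rightarrow> real"
  assumes "finite_measure M" "sets M = sets R" "f \<in> borel_measurable R"
    and "\<And>x. x \<in> space R \<Longrightarrow> \<bar>f x\<bar> \<le> K"
  shows "integrable M f"
proof -
  interpret finite_measure M by fact
  show ?thesis
    using assms sets_eq_imp_space_eq[OF assms(2)] measurable_cong_sets[OF assms(2) refl]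
    by (intro integrable_const_bound[where B = K]) auto
qed

lemma abs_integral_le_bound:
  fixes f :: "'a \<Rightarrow> real"
  assumes "prob_space M" "sets M = sets R" "f \<in> borel_measurable R"
    and "\<And>x. x \<in> space R \<Longrightarrow> \<bar>f x\<bar> \<le> K"
  shows "\<bar>integral\<^sup>L M f\<bar> \<le> K"
proof -
  interpret prob_space M by fact
  have "\<bar>integral\<^sup>L M f\<bar> \<le> (\<integral>x. \<bar>f x\<bar> \<partial>M)"
    by simp
  also have "\<dots> \<le> (\<integral>x. K \<partial>M)"
    using assms sets_eq_imp_space_eq[OF assms(2)]
      integrable_bounded_measurable[OF finite_measure assms(2-)]
    by (intro integral_mono) auto
  finally show ?thesis
    by (simp add: prob_space)
qed

lemma integral_tendsto_bounded_pointwise: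
  fixes u :: "'a \<Rightarrow> real"
  assumes "finite_measure M" "sets M = sets R"
    and "u \<in> borel_measurable R" "\<And>i. U i \<in> borel_measurable R"
    and "\<And>i x. x \<in> space R \<Longrightarrow> \<bar>U i x\<bar> \<le> K"
    and "\<And>x. x \<in> space R \<Longrightarrow> (\<lambda>i. U i x) \<longlonglongrightarrow> u x"
  shows "(\<lambda>i. integral\<^sup>L M (U i)) \<longlonglongrightarrow> integral\<^sup>L M u"
proof -
  interpret finite_measure M by fact
  show ?thesis
    using assms sets_eq_imp_space_eq[OF assms(2)] measurable_cong_sets[OF assms(2) refl]
    by (intro integral_dominated_convergence[where w = "\<lambda>_. K"]) (auto intro!: AE_I2)
qed

lemma integral_eq_sum_bounded_limit:
  fixes u :: "'a \<Rightarrow> real"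
  assumes M: "finite_measure M" "sets M = sets R"
    and N: "\<And>j. j \<in> J \<Longrightarrow> finite_measure (N j) \<and> sets (N j) = sets R"
    and eq: "\<And>i. integral\<^sup>L M (U i) = (\<Sum>j\<in>J. c j * integral\<^sup>L (N j) (U i))"
    and limit: "u \<in> borel_measurable R" "\<And>i. U i \<in> borel_measurable R"
      "\<And>i x. x \<in> space R \<Longrightarrow> \<bar>U i x\<bar> \<le> K" "\<And>x. x \<in> space R \<Longrightarrow> (\<lambda>i. U i x) \<longlonglongrightarrow> u x"
  shows "integral\<^sup>L M u = (\<Sum>j\<in>J. c j * integral\<^sup>L (N j) u)"
proof -
  have tendsto: "(\<lambda>i. integral\<^sup>L L (U i)) \<longlonglongrightarrow> integral\<^sup>L L u"
    if "finite_measure L" "sets L = sets R" for L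
    using that limit by (rule integral_tendsto_bounded_pointwise)
  have "(\<lambda>i. \<Sum>j\<in>J. c j * integral\<^sup>L (N j) (U i)) \<longlonglongrightarrow> (\<Sum>j\<in>J. c j * integral\<^sup>L (N j) u)"
    using N by (intro tendsto_sum tendsto_mult_left tendsto) auto
  with tendsto[OF M] show ?thesis
    unfolding eq by (rule LIMSEQ_unique)
qed

text \<open>The upper bound is carried through the induction only to keep every function
  integrable for all the measures involved.\<close>

lemma integral_eq_sum_if_measure_eq_sum_nonneg:
  fixes u :: "'a \<Rightarrow> real"
  assumes M: "finite_measure M" "sets M = sets R"
    and N: "\<And>j. j \<in> J \<Longrightarrow> finite_measure (N j) \<and> sets (N j) = sets R"
    and eq: "\<And>E. E \<in> sets R \<Longrightarrow> measure M E = (\<Sum>j\<in>J. c j * measure (N j) E)"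
    and u: "u \<in> borel_measurable R" "\<And>x. 0 \<le> u x"
  shows "(\<exists>K. \<forall>x\<in>space R. u x \<le> K) \<longrightarrow> integral\<^sup>L M u = (\<Sum>j\<in>J. c j * integral\<^sup>L (N j) u)"
  using u
proof (induct rule: borel_measurable_induct_real)
  case (set A)
  have "A \<inter> space L = A" if "sets L = sets R" for L :: "'a measure"
    using sets.sets_into_space[OF set] sets_eq_imp_space_eq[OF that] by blast
  then show ?case
    using eq[OF set] M N by simp
next
  case (mult u c')
  show ?case
  proof
    assume "\<exists>K. \<forall>x\<in>space R. c' * u x \<le> K"
    then obtain K where bounded: "\<forall>x\<in>space R. c' * u x \<le> K" ..
    show "integral\<^sup>L M (\<lambda>x. c' * u x) = (\<Sum>j\<in>J. c j * integral\<^sup>L (N j) (\<lambda>x. c' * u x))"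
    proof (cases "c' = 0")
      case False
      with mult(1) bounded have "\<forall>x\<in>space R. u x \<le> K / c'"
        by (simp add: pos_le_divide_eq mult.commute)
      with mult(4) have "integral\<^sup>L M u = (\<Sum>j\<in>J. c j * integral\<^sup>L (N j) u)"
        by blast
      then show ?thesis
        by (simp add: sum_distrib_left algebra_simps)
    qed simp
  qed
next
  case (add u v)
  show ?case
  proof
    assume "\<exists>K. \<forall>x\<in>space R. v x + u x \<le> K"
    then obtain K where bounded: "\<forall>x\<in>space R. v x + u x \<le> K" ..
    have bu: "\<bar>u x\<bar> \<le> K" and bv: "\<bar>v x\<bar> \<le> K" if "x \<in> space R" for x
      using add(2)[of x] add(5)[of x] bounded that unfolding abs_le_iff by auto
    have "integral\<^sup>L M u = (\<Sum>j\<in>J. c j * integral\<^sup>L (N j) u)"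
      "integral\<^sup>L M v = (\<Sum>j\<in>J. c j * integral\<^sup>L (N j) v)"
      using add(3,7) bu bv abs_le_D1 by blast+
    moreover have "integrable L u" "integrable L v" if "finite_measure L" "sets L = sets R" for L
      using integrable_bounded_measurable[OF that] add(1,4) bu bv by blast+
    ultimately show "integral\<^sup>L M (\<lambda>x. v x + u x) = (\<Sum>j\<in>J. c j * integral\<^sup>L (N j) (\<lambda>x. v x + u x))"
      using M N by (simp add: sum.distrib distrib_left)
  qed
next
  case (seq U)
  show ?case
  proof
    assume "\<exists>K. \<forall>x\<in>space R. u x \<le> K"
    then obtain K where bounded: "\<forall>x\<in>space R. u x \<le> K" ..
    have "U i x \<le> u x" if "x \<in> space R" for i x
      using seq(4,5) that by (intro incseq_le) (auto simp: incseq_def le_fun_def)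
    with seq(2) bounded have bound: "\<bar>U i x\<bar> \<le> K" if "x \<in> space R" for i x
      using that unfolding abs_le_iff
      by (meson order.trans order_trans[OF _ seq(2)] neg_le_0_iff_le)
    then have "integral\<^sup>L M (U i) = (\<Sum>j\<in>J. c j * integral\<^sup>L (N j) (U i))" for i
      using seq(3) abs_le_D1 by blast
    from M N this \<open>u \<in> borel_measurable R\<close> seq(1) bound seq(5)
    show "integral\<^sup>L M u = (\<Sum>j\<in>J. c j * integral\<^sup>L (N j) u)"
      by (rule integral_eq_sum_bounded_limit)
  qed
qed

lemma integral_eq_sum_if_measure_eq_sum:
  fixes f :: "'a \<Rightarrow> real"
  assumes M: "finite_measure M" "sets M = sets R"
    and N: "\<And>j. j \<in> J \<Longrightarrow> finite_measure (N j) \<and> sets (N j) = sets R"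
    and eq: "\<And>E. E \<in> sets R \<Longrightarrow> measure M E = (\<Sum>j\<in>J. c j * measure (N j) E)"
    and f: "f \<in> borel_measurable R" "\<And>x. x \<in> space R \<Longrightarrow> \<bar>f x\<bar> \<le> K"
  shows "integral\<^sup>L M f = (\<Sum>j\<in>J. c j * integral\<^sup>L (N j) f)"
proof -
  define fp where "fp x = max (f x) 0" for x
  define fm where "fm x = max (- f x) 0" for x
  have meas: "fp \<in> borel_measurable R" "fm \<in> borel_measurable R"
    using f(1) unfolding fp_def fm_def by measurable
  have bound: "\<And>x. x \<in> space R \<Longrightarrow> \<bar>fp x\<bar> \<le> K" "\<And>x. x \<in> space R \<Longrightarrow> \<bar>fm x\<bar> \<le> K"
    using f(2) by (fastforce simp: fp_def fm_def)+
  have "\<And>x. 0 \<le> fp x" "\<And>x. 0 \<le> fm x"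
    by (simp_all add: fp_def fm_def)
  then have "integral\<^sup>L M fp = (\<Sum>j\<in>J. c j * integral\<^sup>L (N j) fp)"
    "integral\<^sup>L M fm = (\<Sum>j\<in>J. c j * integral\<^sup>L (N j) fm)"
    using integral_eq_sum_if_measure_eq_sum_nonneg[OF M N eq] meas bound abs_le_D1 by blast+
  moreover have "integrable L fp" "integrable L fm" if "finite_measure L" "sets L = sets R" for L
    using integrable_bounded_measurable[OF that] meas bound by blast+
  moreover have "f = (\<lambda>x. fp x - fm x)"
    by (auto simp: fp_def fm_def)
  ultimately show ?thesis
    using M N by (simp add: sum_subtractf right_diff_distrib)
qed

section \<open>Finite Borel measures are determined by continuous functions\<close>

lemma sets_restrict_borel_eq_sigma_closed:
  fixes S :: "'a::topological_space set"
  shows "sets (restrict_space borel S) = sigma_sets S {F \<inter> S | F. closed F}"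
proof -
  have "sets (restrict_space borel S) =
      sets (vimage_algebra S (\<lambda>x. x) (sigma UNIV (Collect closed)))"
    by (simp add: restrict_space_eq_vimage_algebra borel_eq_closed[symmetric])
  also have "\<dots> = sets (sigma S {F \<inter> S | F. closed F})"
    by (subst vimage_algebra_sigma) auto
  also have "\<dots> = sigma_sets S {F \<inter> S | F. closed F}"
    by (rule sets_measure_of) auto
  finally show ?thesis .
qed

lemma tendsto_closed_cutoff_indicator:
  fixes F :: "'a::metric_space set"
  assumes "closed F" "F \<noteq> {}"
  shows "(\<lambda>n. max 0 (1 - real n * infdist x F)) \<longlonglongrightarrow> indicator F x"
proof (cases "x \<in> F")
  case False
  then have "0 < infdist x F"
    using assms in_closed_iff_infdist_zero infdist_nonneg[of x F] by fastforce
  then have "\<forall>\<^sub>F n in sequentially. 1 / infdist x F < real n"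
    using filterlim_real_sequentially unfolding filterlim_at_top_dense by blast
  then have "\<forall>\<^sub>F n in sequentially. max 0 (1 - real n * infdist x F) = 0"
    by eventually_elim (use \<open>0 < infdist x F\<close> in \<open>simp add: field_simps\<close>)
  then show ?thesis
    using False by (simp add: tendsto_eventually)
qed (simp add: infdist_zero)

lemma Int_stable_closed_Int: "Int_stable {F \<inter> S | F. closed F}"
proof (rule Int_stableI)
  fix A B assume "A \<in> {F \<inter> S | F. closed F}" "B \<in> {F \<inter> S | F. closed F}"
  then obtain F1 F2 where "closed F1" "closed F2" "A = F1 \<inter> S" "B = F2 \<inter> S"
    by blast
  then show "A \<inter> B \<in> {F \<inter> S | F. closed F}"
    by (intro CollectI exI[of _ "F1 \<inter> F2"]) auto
qed

lemma measure_eq_sum_if_closed_eq_sum: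
  fixes S :: "'a::topological_space set"
  assumes M: "finite_measure M" "sets M = sets (restrict_space borel S)"
    and N: "\<And>j. j \<in> J \<Longrightarrow> finite_measure (N j) \<and> sets (N j) = sets (restrict_space borel S)"
    and closed_eq: "\<And>F. closed F \<Longrightarrow> measure M (F \<inter> S) = (\<Sum>j\<in>J. c j * measure (N j) (F \<inter> S))"
    and E: "E \<in> sets (restrict_space borel S)"
  shows "measure M E = (\<Sum>j\<in>J. c j * measure (N j) E)"
proof -
  let ?G = "{F \<inter> S | F. closed F}"
  have sets_eq: "sets (restrict_space borel S) = sigma_sets S ?G"
    by (rule sets_restrict_borel_eq_sigma_closed)
  have "Int_stable ?G"
    by (rule Int_stable_closed_Int)
  moreover have "?G \<subseteq> Pow S"
    by auto
  moreover have "E \<in> sigma_sets S ?G"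
    using E sets_eq by simp
  ultimately show ?thesis
  proof (induct rule: sigma_sets_induct_disjoint)
    case (basic A)
    then show ?case
      using closed_eq by auto
  next
    case empty
    show ?case
      by simp
  next
    case (compl A)
    have "A \<in> sets (restrict_space borel S)"
      using compl(1) sets_eq by simp
    then have "measure L (S - A) = measure L S - measure L A"
      if "finite_measure L" "sets L = sets (restrict_space borel S)" for L
      using that finite_measure.finite_measure_compl[of L A] space_eq_if_sets_restrict_space[of L S]
      by simp
    then show ?case
      using compl(2) closed_eq[of UNIV] M N
      by (simp add: right_diff_distrib sum_subtractf)
  next
    case (union A)
    have "range A \<subseteq> sets (restrict_space borel S)"
      using union(2) sets_eq by simp
    then have sums: "(\<lambda>i. measure L (A i)) sums measure L (\<Union>i. A i)"
      if "finite_measure L" "sets L = sets (restrict_space borel S)" for L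
      using that union(1) finite_measure.finite_measure_UNION[of L A] by simp
    have "(\<lambda>i. \<Sum>j\<in>J. c j * measure (N j) (A i)) sums (\<Sum>j\<in>J. c j * measure (N j) (\<Union>i. A i))"
      using N by (intro sums_sum sums_mult sums) auto
    then show ?case
      using sums[OF M] union(3) sums_unique2 by simp
  qed
qed

lemma measure_eq_sum_if_integral_eq_sum:
  fixes S :: "'a::metric_space set"
  assumes M: "finite_measure M" "sets M = sets (restrict_space borel S)"
    and N: "\<And>j. j \<in> J \<Longrightarrow> finite_measure (N j) \<and> sets (N j) = sets (restrict_space borel S)"
    and integral_eq: "\<And>f. bcontinuous S f \<Longrightarrow> integral\<^sup>L M f = (\<Sum>j\<in>J. c j * integral\<^sup>L (N j) f)"
    and E: "E \<in> sets (restrict_space borel S)"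
  shows "measure M E = (\<Sum>j\<in>J. c j * measure (N j) E)"
proof (rule measure_eq_sum_if_closed_eq_sum[OF M N _ E])
  fix F :: "'a set" assume "closed F"
  show "measure M (F \<inter> S) = (\<Sum>j\<in>J. c j * measure (N j) (F \<inter> S))"
  proof (cases "F = {}")
    case False
    define g where "g n x = max 0 (1 - real n * infdist x F)" for n :: nat and x
    have cont: "continuous_on S (g n)" for n
      unfolding g_def by (intro continuous_intros)
    have bound: "\<bar>g n x\<bar> \<le> 1" for n x
      using infdist_nonneg[of x F] by (simp add: g_def)
    then have "bcontinuous S (g n)" for n
      using cont by (auto simp: bcontinuous_def bounded_real)
    then have g_eq: "integral\<^sup>L M (g n) = (\<Sum>j\<in>J. c j * integral\<^sup>L (N j) (g n))" for n
      using integral_eq by simp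
    have indicator_meas: "(indicator F :: 'a \<Rightarrow> real) \<in> borel_measurable (restrict_space borel S)"
      using \<open>closed F\<close> by (intro measurable_restrict_space1 borel_measurable_indicator) simp
    have g_meas: "g n \<in> borel_measurable (restrict_space borel S)" for n
      using cont by (rule borel_measurable_continuous_on_restrict)
    have g_lim: "(\<lambda>n. g n x) \<longlonglongrightarrow> indicator F x" for x
      unfolding g_def using \<open>closed F\<close> False by (rule tendsto_closed_cutoff_indicator)
    have "integral\<^sup>L M (indicator F) = (\<Sum>j\<in>J. c j * integral\<^sup>L (N j) (indicator F))"
      using integral_eq_sum_bounded_limit[OF M N g_eq indicator_meas g_meas bound g_lim] .
    moreover have "integral\<^sup>L L (indicator F) = measure L (F \<inter> S)"
      if "sets L = sets (restrict_space borel S)" for L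
      using space_eq_if_sets_restrict_space[OF that] by simp
    ultimately show ?thesis
      using M N by simp
  qed simp
qed

lemma abs_le_sup_norm:
  assumes "bcontinuous S f" "s \<in> S"
  shows "\<bar>f s\<bar> \<le> sup_norm S f"
  unfolding sup_norm_def
proof (rule cSUP_upper[OF assms(2)])
  obtain K where "\<forall>y\<in>f ` S. \<bar>y\<bar> \<le> K"
    using assms(1) unfolding bcontinuous_def bounded_real by blast
  then show "bdd_above ((\<lambda>s. \<bar>f s\<bar>) ` S)"
    by (auto intro!: bdd_aboveI2[where M = K])
qed

lemma borel_measurable_bcontinuous:
  "bcontinuous S f \<Longrightarrow> f \<in> borel_measurable (restrict_space borel S)"
  unfolding bcontinuous_def by (simp add: borel_measurable_continuous_on_restrict)

lemma abs_integral_le_sup_norm: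
  assumes "prob_space M" "sets M = sets (restrict_space borel S)" "bcontinuous S f"
  shows "\<bar>integral\<^sup>L M f\<bar> \<le> sup_norm S f"
  using assms abs_le_sup_norm[OF assms(3)]
  by (intro abs_integral_le_bound[OF _ _ borel_measurable_bcontinuous])
    (auto simp: space_restrict_space)

section \<open>Anchor points of a feature map\<close>

text \<open>The vectors \<open>b z\<close> act as a dual basis to the anchor features \<open>\<phi> z\<close>: they read off
  the coefficients of every feature vector along them.\<close>

definition spanning_anchors ::
  "'x set \<Rightarrow> ('x \<Rightarrow> 'v::euclidean_space) \<Rightarrow> 'x set \<Rightarrow> ('x \<Rightarrow> 'v) \<Rightarrow> bool" where
  "spanning_anchors X \<phi> Z b \<longleftrightarrow> finite Z \<and> Z \<subseteq> X \<and> (\<forall>x\<in>X. \<phi> x = (\<Sum>z\<in>Z. (\<phi> x \<bullet> b z) *\<^sub>R \<phi> z))"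

lemma spanning_anchors_exist:
  fixes \<phi> :: "'x \<Rightarrow> 'v::euclidean_space"
  shows "\<exists>Z b. spanning_anchors X \<phi> Z b"
proof -
  obtain B where B: "B \<subseteq> \<phi> ` X" "independent B" "\<phi> ` X \<subseteq> span B"
    by (rule maximal_independent_subset)
  obtain Z where "Z \<subseteq> X" "inj_on \<phi> Z" "B = \<phi> ` Z"
    using B(1) subset_image_inj by metis
  have "finite Z"
    using finiteI_independent[OF B(2)] \<open>B = \<phi> ` Z\<close> \<open>inj_on \<phi> Z\<close> finite_image_iff by blast
  have "\<exists>l. linear l \<and> (\<forall>v\<in>B. l v = (if v = w then 1 else 0 :: real))" for w
    by (rule linear_independent_extend[OF B(2)])
  then obtain l :: "'v \<Rightarrow> 'v \<Rightarrow> real"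
    where l: "\<And>w. linear (l w)" "\<And>w v. v \<in> B \<Longrightarrow> l w v = (if v = w then 1 else 0)"
    by metis
  define b where "b z = adjoint (l (\<phi> z)) 1" for z
  have coord: "y \<bullet> b z = l (\<phi> z) y" for y z
    using adjoint_works[OF l(1)] by (simp add: b_def)
  have "\<phi> x = (\<Sum>z\<in>Z. (\<phi> x \<bullet> b z) *\<^sub>R \<phi> z)" if "x \<in> X" for x
  proof -
    obtain u where u: "\<phi> x = (\<Sum>v\<in>B. u v *\<^sub>R v)"
      using B(3) \<open>x \<in> X\<close> span_finite[OF finiteI_independent[OF B(2)]] by blast
    have "l w (\<phi> x) = u w" if "w \<in> B" for w
    proof -
      have "l w (\<phi> x) = (\<Sum>v\<in>B. u v * l w v)"
        unfolding u by (simp add: linear_sum[OF l(1)] linear_scale[OF l(1)])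
      also have "\<dots> = (\<Sum>v\<in>B. if v = w then u v else 0)"
        using l(2) by (intro sum.cong) auto
      also have "\<dots> = u w"
        using finiteI_independent[OF B(2)] that by simp
      finally show ?thesis .
    qed
    then have "\<phi> x = (\<Sum>v\<in>B. l v (\<phi> x) *\<^sub>R v)"
      unfolding u by (intro sum.cong) auto
    also have "\<dots> = (\<Sum>z\<in>Z. (\<phi> x \<bullet> b z) *\<^sub>R \<phi> z)"
      unfolding \<open>B = \<phi> ` Z\<close> using \<open>inj_on \<phi> Z\<close> by (simp add: sum.reindex coord)
    finally show ?thesis .
  qed
  then show ?thesis
    using \<open>finite Z\<close> \<open>Z \<subseteq> X\<close> unfolding spanning_anchors_def by blast
qed

lemma spanning_anchors_inner:
  assumes "spanning_anchors X \<phi> Z b" "x \<in> X"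
  shows "\<phi> x \<bullet> w = (\<Sum>z\<in>Z. (\<phi> x \<bullet> b z) * (\<phi> z \<bullet> w))"
proof -
  have "\<phi> x = (\<Sum>z\<in>Z. (\<phi> x \<bullet> b z) *\<^sub>R \<phi> z)"
    using assms unfolding spanning_anchors_def by blast
  then have "\<phi> x \<bullet> w = (\<Sum>z\<in>Z. (\<phi> x \<bullet> b z) *\<^sub>R \<phi> z) \<bullet> w"
    by (rule arg_cong[where f = "\<lambda>y. y \<bullet> w"])
  also have "\<dots> = (\<Sum>z\<in>Z. (\<phi> x \<bullet> b z) * (\<phi> z \<bullet> w))"
    by (simp add: inner_sum_left)
  finally show ?thesis .
qed

definition anchor_combination ::
  "'x set \<Rightarrow> ('x \<Rightarrow> 'v::euclidean_space) \<Rightarrow> 'x set \<Rightarrow> ('x \<Rightarrow> 'v) \<Rightarrow> ('x \<Rightarrow> real) \<Rightarrow> bool" where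
  "anchor_combination X \<phi> Z b g \<longleftrightarrow> (\<forall>x\<in>X. g x = (\<Sum>z\<in>Z. (\<phi> x \<bullet> b z) * g z))"

lemma anchor_combination_if_inner:
  assumes "spanning_anchors X \<phi> Z b" and "\<And>x. x \<in> X \<Longrightarrow> g x = \<phi> x \<bullet> \<theta>"
  shows "anchor_combination X \<phi> Z b g"
  unfolding anchor_combination_def
proof
  fix x assume "x \<in> X"
  have "Z \<subseteq> X"
    using assms(1) by (simp add: spanning_anchors_def)
  have "g x = \<phi> x \<bullet> \<theta>"
    using assms(2) \<open>x \<in> X\<close> .
  also have "\<dots> = (\<Sum>z\<in>Z. (\<phi> x \<bullet> b z) * (\<phi> z \<bullet> \<theta>))"
    using assms(1) \<open>x \<in> X\<close> by (rule spanning_anchors_inner)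
  also have "\<dots> = (\<Sum>z\<in>Z. (\<phi> x \<bullet> b z) * g z)"
    using assms(2) \<open>Z \<subseteq> X\<close> by (intro sum.cong) auto
  finally show "g x = (\<Sum>z\<in>Z. (\<phi> x \<bullet> b z) * g z)" .
qed

lemma inner_if_anchor_combination:
  assumes "anchor_combination X \<phi> Z b g" and "x \<in> X"
  shows "g x = \<phi> x \<bullet> (\<Sum>z\<in>Z. g z *\<^sub>R b z)"
  using assms by (simp add: anchor_combination_def inner_sum_right mult.commute)

section \<open>Both conditions reduced to the anchor identity\<close>

lemma anchor_combination_measure_iff_integral:
  fixes K :: "'x \<Rightarrow> 'a::metric_space measure"
  assumes "spanning_anchors X \<phi> Z b"
    and K: "\<And>x. x \<in> X \<Longrightarrow> finite_measure (K x) \<and> sets (K x) = sets (restrict_space borel S)"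
  shows "(\<forall>E\<in>sets (restrict_space borel S). anchor_combination X \<phi> Z b (\<lambda>x. measure (K x) E))
     \<longleftrightarrow> (\<forall>f. bcontinuous S f \<longrightarrow> anchor_combination X \<phi> Z b (\<lambda>x. integral\<^sup>L (K x) f))"
proof -
  have ZK: "\<And>z. z \<in> Z \<Longrightarrow> finite_measure (K z) \<and> sets (K z) = sets (restrict_space borel S)"
    using assms unfolding spanning_anchors_def by blast
  show ?thesis
  proof (intro iffI allI impI ballI)
    fix f
    assume comb: "\<forall>E\<in>sets (restrict_space borel S).
        anchor_combination X \<phi> Z b (\<lambda>x. measure (K x) E)"
      and f: "bcontinuous S f"
    show "anchor_combination X \<phi> Z b (\<lambda>x. integral\<^sup>L (K x) f)"
      unfolding anchor_combination_def
    proof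
      fix x assume "x \<in> X"
      show "integral\<^sup>L (K x) f = (\<Sum>z\<in>Z. (\<phi> x \<bullet> b z) * integral\<^sup>L (K z) f)"
        using K[OF \<open>x \<in> X\<close>] comb \<open>x \<in> X\<close> abs_le_sup_norm[OF f]
        by (intro integral_eq_sum_if_measure_eq_sum[OF _ _ ZK _ borel_measurable_bcontinuous[OF f],
              where K = "sup_norm S f"])
          (auto simp: anchor_combination_def space_restrict_space)
    qed
  next
    fix E assume comb: "\<forall>f. bcontinuous S f \<longrightarrow> anchor_combination X \<phi> Z b (\<lambda>x. integral\<^sup>L (K x) f)"
      and E: "E \<in> sets (restrict_space borel S)"
    show "anchor_combination X \<phi> Z b (\<lambda>x. measure (K x) E)"
      unfolding anchor_combination_def
    proof
      fix x assume "x \<in> X"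
      show "measure (K x) E = (\<Sum>z\<in>Z. (\<phi> x \<bullet> b z) * measure (K z) E)"
        using K[OF \<open>x \<in> X\<close>] comb \<open>x \<in> X\<close>
        by (intro measure_eq_sum_if_integral_eq_sum[OF _ _ ZK _ E])
          (auto simp: anchor_combination_def)
    qed
  qed
qed

lemma finite_signed_measure_sum_measure:
  fixes K :: "'z \<Rightarrow> 'a measure"
  assumes "\<And>z. z \<in> Z \<Longrightarrow> finite_measure (K z) \<and> sets (K z) = sets R"
  shows "finite_signed_measure R (\<lambda>E. \<Sum>z\<in>Z. measure (K z) E * c z)"
  unfolding finite_signed_measure_def
proof (intro conjI allI impI)
  fix F :: "nat \<Rightarrow> 'a set" assume F: "range F \<subseteq> sets R" "disjoint_family F"
  show "(\<lambda>n. \<Sum>z\<in>Z. measure (K z) (F n) * c z) sums (\<Sum>z\<in>Z. measure (K z) (\<Union>n. F n) * c z)"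
  proof (rule sums_sum)
    fix z assume "z \<in> Z"
    then have "(\<lambda>n. measure (K z) (F n)) sums measure (K z) (\<Union>n. F n)"
      using assms F by (intro finite_measure.finite_measure_UNION) auto
    then show "(\<lambda>n. measure (K z) (F n) * c z) sums (measure (K z) (\<Union>n. F n) * c z)"
      by (rule sums_mult2)
  qed
qed simp

lemma low_rank_kernel_iff_anchor_combination:
  fixes \<phi> :: "'x \<Rightarrow> real ^ 'd" and K :: "'x \<Rightarrow> 'a measure"
  assumes anchors: "spanning_anchors X \<phi> Z b"
    and K: "\<And>x. x \<in> X \<Longrightarrow> finite_measure (K x) \<and> sets (K x) = sets R"
  shows "(\<exists>(\<nu>::'d \<Rightarrow> 'a set \<Rightarrow> real) \<theta>. (\<forall>i. finite_signed_measure R (\<nu> i)) \<and>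
            (\<forall>x\<in>X. (\<forall>E\<in>sets R. measure (K x) E = (\<Sum>i\<in>UNIV. \<phi> x $ i * \<nu> i E)) \<and> \<rho> x = \<phi> x \<bullet> \<theta>))
     \<longleftrightarrow> (\<forall>E\<in>sets R. anchor_combination X \<phi> Z b (\<lambda>x. measure (K x) E)) \<and> anchor_combination X \<phi> Z b \<rho>"
proof
  assume "\<exists>\<nu> \<theta>. (\<forall>i. finite_signed_measure R (\<nu> i)) \<and>
    (\<forall>x\<in>X. (\<forall>E\<in>sets R. measure (K x) E = (\<Sum>i\<in>UNIV. \<phi> x $ i * \<nu> i E)) \<and> \<rho> x = \<phi> x \<bullet> \<theta>)"
  then obtain \<nu> :: "'d \<Rightarrow> 'a set \<Rightarrow> real" and \<theta> where
    kernel: "\<forall>x\<in>X. \<forall>E\<in>sets R. measure (K x) E = (\<Sum>i\<in>UNIV. \<phi> x $ i * \<nu> i E)"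
    and reward: "\<And>x. x \<in> X \<Longrightarrow> \<rho> x = \<phi> x \<bullet> \<theta>"
    by blast
  have "anchor_combination X \<phi> Z b (\<lambda>x. measure (K x) E)" if "E \<in> sets R" for E
  proof (rule anchor_combination_if_inner[OF anchors])
    show "measure (K x) E = \<phi> x \<bullet> (\<chi> i. \<nu> i E)" if "x \<in> X" for x
      using kernel \<open>E \<in> sets R\<close> that by (simp add: inner_vec_def)
  qed
  then show "(\<forall>E\<in>sets R. anchor_combination X \<phi> Z b (\<lambda>x. measure (K x) E)) \<and>
      anchor_combination X \<phi> Z b \<rho>"
    using anchor_combination_if_inner[OF anchors reward] by blast
next
  assume comb: "(\<forall>E\<in>sets R. anchor_combination X \<phi> Z b (\<lambda>x. measure (K x) E)) \<and>
    anchor_combination X \<phi> Z b \<rho>"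
  define \<nu> where "\<nu> i E = (\<Sum>z\<in>Z. measure (K z) E * b z $ i)" for i E
  have "finite_signed_measure R (\<nu> i)" for i
    unfolding \<nu>_def using anchors K
    by (intro finite_signed_measure_sum_measure) (auto simp: spanning_anchors_def)
  moreover have "measure (K x) E = (\<Sum>i\<in>UNIV. \<phi> x $ i * \<nu> i E)" if "x \<in> X" "E \<in> sets R" for x E
  proof -
    have "anchor_combination X \<phi> Z b (\<lambda>x. measure (K x) E)"
      using comb that(2) by blast
    from inner_if_anchor_combination[OF this that(1)]
    show ?thesis
      by (simp add: \<nu>_def inner_vec_def real_scaleR_def)
  qed
  ultimately show "\<exists>\<nu> \<theta>. (\<forall>i. finite_signed_measure R (\<nu> i)) \<and>
    (\<forall>x\<in>X. (\<forall>E\<in>sets R. measure (K x) E = (\<Sum>i\<in>UNIV. \<phi> x $ i * \<nu> i E)) \<and> \<rho> x = \<phi> x \<bullet> \<theta>)"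
    using inner_if_anchor_combination[of X \<phi> Z b \<rho>] comb by blast
qed

lemma anchor_combination_if_linear_bellman:
  assumes anchors: "spanning_anchors X \<phi> Z b"
    and solutions: "\<And>f. bcontinuous S f \<Longrightarrow> \<exists>\<omega>. \<forall>x\<in>X. \<rho> x + integral\<^sup>L (K x) f = \<phi> x \<bullet> \<omega>"
  shows "anchor_combination X \<phi> Z b \<rho> \<and>
    (\<forall>f. bcontinuous S f \<longrightarrow> anchor_combination X \<phi> Z b (\<lambda>x. integral\<^sup>L (K x) f))"
proof -
  have bellman: "anchor_combination X \<phi> Z b (\<lambda>x. \<rho> x + integral\<^sup>L (K x) f)"
    if f: "bcontinuous S f" for f
  proof -
    obtain \<omega> where "\<And>x. x \<in> X \<Longrightarrow> \<rho> x + integral\<^sup>L (K x) f = \<phi> x \<bullet> \<omega>"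
      using solutions[OF f] by blast
    then show ?thesis
      by (rule anchor_combination_if_inner[OF anchors])
  qed
  have "bcontinuous S (\<lambda>_. 0)"
    by (auto simp: bcontinuous_def bounded_real)
  from bellman[OF this] have "anchor_combination X \<phi> Z b \<rho>"
    by simp
  moreover have "anchor_combination X \<phi> Z b (\<lambda>x. integral\<^sup>L (K x) f)" if "bcontinuous S f" for f
    using bellman[OF that] \<open>anchor_combination X \<phi> Z b \<rho>\<close>
    by (simp add: anchor_combination_def sum.distrib distrib_left)
  ultimately show ?thesis
    by blast
qed

lemma linear_bellman_if_anchor_combination:
  assumes anchors: "spanning_anchors X \<phi> Z b"
    and K: "\<And>x. x \<in> X \<Longrightarrow> prob_space (K x) \<and> sets (K x) = sets (restrict_space borel S)"
    and reward: "\<And>x. x \<in> X \<Longrightarrow> \<bar>\<rho> x\<bar> \<le> 1"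
    and "S \<noteq> {}" and f: "bcontinuous S f"
    and comb: "anchor_combination X \<phi> Z b \<rho>" "anchor_combination X \<phi> Z b (\<lambda>x. integral\<^sup>L (K x) f)"
  shows "\<exists>\<omega>. (\<forall>x\<in>X. \<rho> x + integral\<^sup>L (K x) f = \<phi> x \<bullet> \<omega>) \<and>
    norm \<omega> \<le> (1 + (\<Sum>z\<in>Z. norm (b z))) * (sup_norm S f + 1)"
proof (intro exI conjI)
  define T where "T x = \<rho> x + integral\<^sup>L (K x) f" for x
  have "anchor_combination X \<phi> Z b T"
    using comb by (simp add: T_def anchor_combination_def sum.distrib distrib_left)
  then show "\<forall>x\<in>X. \<rho> x + integral\<^sup>L (K x) f = \<phi> x \<bullet> (\<Sum>z\<in>Z. T z *\<^sub>R b z)"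
    using inner_if_anchor_combination T_def by metis
  have "0 \<le> sup_norm S f"
    using \<open>S \<noteq> {}\<close> abs_le_sup_norm[OF f] by (meson abs_ge_zero ex_in_conv order.trans)
  have "\<bar>T z\<bar> \<le> sup_norm S f + 1" if "z \<in> Z" for z
  proof -
    have "z \<in> X"
      using anchors that by (auto simp: spanning_anchors_def)
    then show ?thesis
      using reward abs_integral_le_sup_norm[OF _ _ f] K unfolding T_def
      by (smt (verit, best))
  qed
  then have "norm (\<Sum>z\<in>Z. T z *\<^sub>R b z) \<le> (\<Sum>z\<in>Z. (sup_norm S f + 1) * norm (b z))"
    by (intro order.trans[OF norm_sum] sum_mono) (simp add: mult_right_mono)
  also have "\<dots> \<le> (1 + (\<Sum>z\<in>Z. norm (b z))) * (sup_norm S f + 1)"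
    using \<open>0 \<le> sup_norm S f\<close> by (simp add: sum_distrib_left algebra_simps)
  finally show "norm (\<Sum>z\<in>Z. T z *\<^sub>R b z) \<le> (1 + (\<Sum>z\<in>Z. norm (b z))) * (sup_norm S f + 1)" .
qed

lemma linear_bellman_iff_anchor_combination:
  fixes \<phi> :: "'x \<Rightarrow> 'v::euclidean_space" and K :: "'x \<Rightarrow> 'a::metric_space measure"
  assumes anchors: "spanning_anchors X \<phi> Z b"
    and K: "\<And>x. x \<in> X \<Longrightarrow> prob_space (K x) \<and> sets (K x) = sets (restrict_space borel S)"
    and reward: "\<And>x. x \<in> X \<Longrightarrow> \<bar>\<rho> x\<bar> \<le> 1"
    and "S \<noteq> {}"
  shows "(\<exists>C>0. \<forall>f. bcontinuous S f \<longrightarrow>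
            (\<exists>\<omega>. (\<forall>x\<in>X. \<rho> x + (\<integral>s'. f s' \<partial>K x) = \<phi> x \<bullet> \<omega>) \<and> norm \<omega> \<le> C * (sup_norm S f + 1)))
     \<longleftrightarrow> (\<forall>E\<in>sets (restrict_space borel S). anchor_combination X \<phi> Z b (\<lambda>x. measure (K x) E)) \<and>
         anchor_combination X \<phi> Z b \<rho>"
proof -
  have "\<And>x. x \<in> X \<Longrightarrow> finite_measure (K x) \<and> sets (K x) = sets (restrict_space borel S)"
    using K prob_space.finite_measure by blast
  note measure_iff_integral = anchor_combination_measure_iff_integral[where K = K, OF anchors this]
  show ?thesis
  proof
    assume "\<exists>C>0. \<forall>f. bcontinuous S f \<longrightarrow>
      (\<exists>\<omega>. (\<forall>x\<in>X. \<rho> x + (\<integral>s'. f s' \<partial>K x) = \<phi> x \<bullet> \<omega>) \<and> norm \<omega> \<le> C * (sup_norm S f + 1))"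
    then have "\<And>f. bcontinuous S f \<Longrightarrow> \<exists>\<omega>. \<forall>x\<in>X. \<rho> x + integral\<^sup>L (K x) f = \<phi> x \<bullet> \<omega>"
      by blast
    from anchor_combination_if_linear_bellman[OF anchors this] measure_iff_integral
    show "(\<forall>E\<in>sets (restrict_space borel S). anchor_combination X \<phi> Z b (\<lambda>x. measure (K x) E)) \<and>
      anchor_combination X \<phi> Z b \<rho>"
      by blast
  next
    assume "(\<forall>E\<in>sets (restrict_space borel S). anchor_combination X \<phi> Z b (\<lambda>x. measure (K x) E)) \<and>
      anchor_combination X \<phi> Z b \<rho>"
    with measure_iff_integral
    have "anchor_combination X \<phi> Z b \<rho>"
      "\<And>f. bcontinuous S f \<Longrightarrow> anchor_combination X \<phi> Z b (\<lambda>x. integral\<^sup>L (K x) f)"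
      by blast+
    with linear_bellman_if_anchor_combination[where K = K and \<rho> = \<rho>, OF anchors K reward \<open>S \<noteq> {}\<close>]
    have "\<forall>f. bcontinuous S f \<longrightarrow> (\<exists>\<omega>. (\<forall>x\<in>X. \<rho> x + integral\<^sup>L (K x) f = \<phi> x \<bullet> \<omega>) \<and>
      norm \<omega> \<le> (1 + (\<Sum>z\<in>Z. norm (b z))) * (sup_norm S f + 1))"
      by blast
    moreover have "0 < 1 + (\<Sum>z\<in>Z. norm (b z))"
      by (simp add: add_pos_nonneg sum_nonneg)
    ultimately show "\<exists>C>0. \<forall>f. bcontinuous S f \<longrightarrow>
      (\<exists>\<omega>. (\<forall>x\<in>X. \<rho> x + (\<integral>s'. f s' \<partial>K x) = \<phi> x \<bullet> \<omega>) \<and> norm \<omega> \<le> C * (sup_norm S f + 1))"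
      by blast
  qed
qed

theorem theorem2:
  fixes S :: "'a::euclidean_space set" and A :: "'b::euclidean_space set"
    and H :: nat and P :: "nat \<Rightarrow> 'a \<Rightarrow> 'b \<Rightarrow> 'a measure"
    and r :: "nat \<Rightarrow> 'a \<Rightarrow> 'b \<Rightarrow> real" and mu :: "'a measure"
    and \<phi> :: "'a \<Rightarrow> 'b \<Rightarrow> real ^ 'd" and h :: nat
  assumes "finite_horizon_mdp S A H P r mu"
    and "compact (S \<times> A)"
    and "h \<in> {1..H}"
  shows "(\<exists>(\<nu>::'d \<Rightarrow> 'a set \<Rightarrow> real) (\<theta>::real ^ 'd).
            (\<forall>i. finite_signed_measure (restrict_space borel S) (\<nu> i)) \<and>
            (\<forall>s\<in>S. \<forall>a\<in>A.
               (\<forall>B\<in>sets (restrict_space borel S).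
                  measure (P h s a) B = (\<Sum>i\<in>UNIV. \<phi> s a $ i * \<nu> i B)) \<and>
               r h s a = \<phi> s a \<bullet> \<theta>))
         \<longleftrightarrow>
         (\<exists>C>0. \<forall>f. bcontinuous S f \<longrightarrow>
            (\<exists>\<omega>::real ^ 'd.
               (\<forall>s\<in>S. \<forall>a\<in>A. r h s a + (\<integral>s'. f s' \<partial>(P h s a)) = \<phi> s a \<bullet> \<omega>) \<and>
               norm \<omega> \<le> C * (sup_norm S f + 1)))"
proof -
  have kernel: "\<And>x. x \<in> S \<times> A \<Longrightarrow> prob_space (case x of (s, a) \<Rightarrow> P h s a) \<and>
      sets (case x of (s, a) \<Rightarrow> P h s a) = sets (restrict_space borel S)"
    and reward: "\<And>x. x \<in> S \<times> A \<Longrightarrow> \<bar>case x of (s, a) \<Rightarrow> r h s a\<bar> \<le> 1"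
    using assms(1,3) unfolding finite_horizon_mdp_def by auto
  have "S \<noteq> {}"
    using assms(1) space_eq_if_sets_restrict_space prob_space.not_empty
    unfolding finite_horizon_mdp_def by metis
  obtain Z b where anchors: "spanning_anchors (S \<times> A) (\<lambda>(s, a). \<phi> s a) Z b"
    using spanning_anchors_exist by blast
  have "\<And>x. x \<in> S \<times> A \<Longrightarrow> finite_measure (case x of (s, a) \<Rightarrow> P h s a) \<and>
      sets (case x of (s, a) \<Rightarrow> P h s a) = sets (restrict_space borel S)"
    using kernel prob_space.finite_measure by blast
  from low_rank_kernel_iff_anchor_combination
      [where K = "\<lambda>(s, a). P h s a" and \<rho> = "\<lambda>(s, a). r h s a", OF anchors this]
    linear_bellman_iff_anchor_combination
      [where K = "\<lambda>(s, a). P h s a" and \<rho> = "\<lambda>(s, a). r h s a", OF anchors kernel reward \<open>S \<noteq> {}\<close>]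
  show ?thesis
    unfolding split_paired_Ball_Sigma prod.case by (simp only:)
qed

end
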